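(* For an ADP problem $\langle\mathcal{P},\mathcal{S}\rangle$ let \[\mathcal{P}'=\mathcal{U}(\mathcal{P})\cup\{\ell\to\mu^{\mathsf{false}}\mid \ell\to\mu^m\in\mathcal{P}\setminus\mathcal{U}(\mathcal{P})\},\qquad \mathcal{S}'=(\mathcal{S}\cap\mathcal{U}(\mathcal{P}))\cup\{\ell\to\mu^{\mathsf{false}}\mid\ell\to\mu^m\in\mathcal{S}\setminus\mathcal{U}(\mathcal{P})\}.\] Then the processor $\mathrm{Proc}_{\mathtt{UR}}(\langle\mathcal{P},\mathcal{S}\rangle)=(\mathrm{Pol}_0,\{\langle\mathcal{P}',\mathcal{S}'\rangle\})$ is sound.
   Context: Annotated dependency pairs (ADPs): over a finite signature $\Sigma$ with fresh annotated copies $f^\sharp$ of symbols, an ADP is $\ell\to\{p_1:r_1,\dots,p_k:r_k\}^m$ with $\ell$ a non-variable unannotated term, $r_j$ possibly annotated with $\mathcal{V}(r_j)\subseteq\mathcal{V}(\ell)$, $0<p_j\le1$, $\sum p_j=1$, flag $m\in\{\mathsf{true},\mathsf{false}\}$; $\operatorname{Supp}(\{p_j:r_j\})$ is the multiset of the $r_j$. For a set $\mathcal{P}$, defined symbols are roots of left-hand sides; basic terms are $f(t_1,\dots,t_k)$ with $f$ defined, $t_i$ free of defined symbols; $|t|$ term size; $\flat$ removes all annotations, $t^\sharp$ annotates the root, $\flat^\uparrow_\pi$ removes annotations strictly above $\pi$; $t\trianglelefteq_\sharp s$ means $t=\flat(s|_\pi)$ for some position $\pi$ of $s$ carrying an annotated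 symbol. Rewriting with $\mathcal{P}$ (innermost): at a position $\pi$ with defined or annotated symbol, ADP $\ell\to\{p_j:r_j\}^m\in\mathcal{P}$, $\sigma$ with $\flat(s|_\pi)=\ell\sigma$ whose proper subterms are normal forms: $t_j=s[r_j\sigma]_\pi$ (at: $m=\mathsf{true}$, $\pi$ annotated), $s[\flat(r_j)\sigma]_\pi$ (nt), $\flat^\uparrow_\pi(s[r_j\sigma]_\pi)$ (af), $\flat^\uparrow_\pi(s[\flat(r_j)\sigma]_\pi)$ (nf). $\mathcal{P}$-chain trees: possibly infinite finitely-branching trees with nodes $(p_v:t_v)$, root probability 1, $t_v$ rewriting to $\{\tfrac{p_w}{p_v}:t_w\}_{w}$ at inner nodes. For $\mathcal{S}\subseteq\mathcal{P}$: $\operatorname{edl}_{\langle\mathcal{P},\mathcal{S}\rangle}(\mathfrak{T})$ sums $p_v$ over inner nodes rewritten by (at)/(af)-steps with ADPs in $\mathcal{S}$; $\operatorname{edh}_{\langle\mathcal{P},\mathcal{S}\rangle}(t)$ = sup over chain trees rooted at $t^\sharp$ ($t$ basic); $\iota_{\langle\mathcal{P},\mathcal{S}\rangle}=\iota(n\mapsto\sup\{\operatorname{edh}_{\langle\mathcal{P},\mathcal{S}\rangle}(t)\mid t\text{ basic},|t|\le n\})$, where complexities $\mathfrak{C}=\{\mathrm{Pol}_0,\mathrm{Pol}_1,\dots,\mathrm{Exp},\mathrm{2\text{-}Exp},\mathrm{Fin},\omega\}$ are ordered in that order, $\oplus$ is maximum, and $\iota(f)=\mathrm{Pol}_a$ for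 least $a$ with $f\in O(n^a)$, else $\mathrm{Exp}$ if $f\in O(2^{\mathrm{pol}(n)})$, else $\mathrm{2\text{-}Exp}$ if $f\in O(2^{2^{\mathrm{pol}(n)}})$, else $\mathrm{Fin}$ if $f$ never equals $\omega$, else $\omega$. Usable rules: $\mathrm{Rules}_{\mathcal{P}}(f)=\{\ell\to\mu^{\mathsf{true}}\in\mathcal{P}\mid\operatorname{root}(\ell)=f\}$. $\mathcal{U}_{\mathcal{P}}(t)=\emptyset$ if $t$ is a variable or $\mathcal{P}=\emptyset$; $\mathcal{U}_{\mathcal{P}}(f(t_1,\dots,t_n))=\mathrm{Rules}_{\mathcal{P}}(f)\cup\bigcup_j\mathcal{U}_{\mathcal{P}'}(t_j)\cup\bigcup_{\ell\to\mu^{\mathsf{true}}\in\mathrm{Rules}_{\mathcal{P}}(f),\,r\in\operatorname{Supp}(\mu)}\mathcal{U}_{\mathcal{P}'}(\flat(r))$ with $\mathcal{P}'=\mathcal{P}\setminus\mathrm{Rules}_{\mathcal{P}}(f)$. $\mathcal{U}(\mathcal{P})=\bigcup_{\ell\to\mu^m\in\mathcal{P},\,r\in\operatorname{Supp}(\mu),\,t\trianglelefteq_\sharp r}\mathcal{U}_{\mathcal{P}}(t^\sharp)$. ADP problems, proof trees, soundness: an ADP problem is $\langle\mathcal{P},\mathcal{S}\rangle$ with $\mathcal{P}$ finite, $\mathcal{S}\subseteq\mathcal{P}$, solved iff $\mathcal{S}=\emptyset$. A processor maps an ADP problem to $(c,\{\langle\mathcal{P}_1,\mathcal{S}_1\rangle,\dots,\langle\mathcal{P}_n,\mathcal{S}_n\rangle\})$,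 $c\in\mathfrak{C}$. A proof tree is a finite tree with node labels $L_{\mathcal{A}}$ (ADP problems) and $L_{\mathcal{C}}$ (complexities) such that each inner node's labels and children arise by a processor application and leaves have $L_{\mathcal{C}}=\mathrm{Pol}_0$ if solved, $\omega$ otherwise. It is well formed if for each node $v$ with $L_{\mathcal{A}}(v)=\langle\mathcal{P},\mathcal{S}\rangle$ and root path $v_1,\dots,v_k=v$: $\iota_{\langle\mathcal{P},\mathcal{S}\rangle}\sqsubseteq L_{\mathcal{C}}(v_1)\oplus\dots\oplus L_{\mathcal{C}}(v_{k-1})\oplus\max\{L'_{\mathcal{C}}(w)\mid w$ reachable from $v$, including $v\}$ and $\iota_{\langle\mathcal{P},\mathcal{P}\setminus\mathcal{S}\rangle}\sqsubseteq L_{\mathcal{C}}(v_1)\oplus\dots\oplus L_{\mathcal{C}}(v_{k-1})$, with $L'_{\mathcal{C}}=L_{\mathcal{C}}$ on inner nodes and $\iota_{L_{\mathcal{A}}(w)}$ on leaves. A processor with $\mathrm{Proc}(\langle\mathcal{P},\mathcal{S}\rangle)=(c,\{\langle\mathcal{P}_i,\mathcal{S}_i\rangle\}_{i\le n})$ is sound if for every well-formed proof tree and node $v$ with $L_{\mathcal{A}}(v)=\langle\mathcal{P},\mathcal{S}\rangle$ and root path $v_1,\dots,v_k=v$: $\iota_{\langle\mathcal{P},\mathcal{S}\rangle}\sqsubseteq L_{\mathcal{C}}(v_1)\oplus\dots\oplus L_{\mathcal{C}}(v_{k-1})\oplus c\oplus\iota_{\langle\mathcal{P}_1,\mathcal{S}_1\rangle}\oplus\dots\oplus\iota_{\langle\mathcal{P}_n,\mathcal{S}_n\rangle}$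 and $\iota_{\langle\mathcal{P}_i,\mathcal{P}_i\setminus\mathcal{S}_i\rangle}\sqsubseteq L_{\mathcal{C}}(v_1)\oplus\dots\oplus L_{\mathcal{C}}(v_{k-1})\oplus c$ for all $i$. *)

theory Defs
  imports "HOL-Analysis.Analysis" "HOL-Library.Multiset"
begin

section \<open>Terms, positions, annotations\<close>

datatype ('f, 'v) trm = Var 'v | Fun 'f "('f, 'v) trm list"

text \<open>Annotated terms: a symbol is a pair (f, b) where b = True means the annotated copy f#.\<close>
type_synonym ('f, 'v) aterm = "('f \<times> bool, 'v) trm"

fun tsize :: "('f, 'v) trm \<Rightarrow> nat" where
  "tsize (Var x) = 1"
| "tsize (Fun f ts) = 1 + sum_list (map tsize ts)"

fun vars :: "('f, 'v) trm \<Rightarrow> 'v set" where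
  "vars (Var x) = {x}"
| "vars (Fun f ts) = (\<Union>t \<in> set ts. vars t)"

fun syms :: "('f, 'v) trm \<Rightarrow> 'f set" where
  "syms (Var x) = {}"
| "syms (Fun f ts) = insert f (\<Union>t \<in> set ts. syms t)"

fun subst :: "('v \<Rightarrow> ('f, 'w) trm) \<Rightarrow> ('f, 'v) trm \<Rightarrow> ('f, 'w) trm" where
  "subst \<sigma> (Var x) = \<sigma> x"
| "subst \<sigma> (Fun f ts) = Fun f (map (subst \<sigma>) ts)"

fun is_pos :: "nat list \<Rightarrow> ('f, 'v) trm \<Rightarrow> bool" where
  "is_pos [] t = True"
| "is_pos (i # p) (Fun f ts) = (i < length ts \<and> is_pos p (ts ! i))"
| "is_pos (i # p) (Var x) = False"

definition poss :: "('f, 'v) trm \<Rightarrow> nat list set" where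
  "poss t = {p. is_pos p t}"

fun subt_at :: "('f, 'v) trm \<Rightarrow> nat list \<Rightarrow> ('f, 'v) trm" where
  "subt_at t [] = t"
| "subt_at (Fun f ts) (i # p) = subt_at (ts ! i) p"
| "subt_at (Var x) (i # p) = Var x"

fun replace_at :: "('f, 'v) trm \<Rightarrow> nat list \<Rightarrow> ('f, 'v) trm \<Rightarrow> ('f, 'v) trm" where
  "replace_at t [] u = u"
| "replace_at (Fun f ts) (i # p) u = Fun f (ts[i := replace_at (ts ! i) p u])"
| "replace_at (Var x) (i # p) u = Var x"

fun root_sym :: "('f, 'v) trm \<Rightarrow> 'f option" where
  "root_sym (Var x) = None"
| "root_sym (Fun f ts) = Some f"

fun flat :: "('f, 'v) aterm \<Rightarrow> ('f, 'v) aterm" where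
  "flat (Var x) = Var x"
| "flat (Fun (f, b) ts) = Fun (f, False) (map flat ts)"

fun sharp :: "('f, 'v) aterm \<Rightarrow> ('f, 'v) aterm" where
  "sharp (Var x) = Var x"
| "sharp (Fun (f, b) ts) = Fun (f, True) ts"

fun flat_up :: "nat list \<Rightarrow> ('f, 'v) aterm \<Rightarrow> ('f, 'v) aterm" where
  "flat_up [] t = t"
| "flat_up (i # p) (Fun (f, b) ts) = Fun (f, False) (ts[i := flat_up p (ts ! i)])"
| "flat_up (i # p) (Var x) = Var x"

definition unannotated :: "('f, 'v) aterm \<Rightarrow> bool" where
  "unannotated t \<longleftrightarrow> (\<forall>(f, b) \<in> syms t. b = False)"

definition annotated_at :: "('f, 'v) aterm \<Rightarrow> nat list \<Rightarrow> bool" where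
  "annotated_at s p \<longleftrightarrow> p \<in> poss s \<and> (\<exists>f ts. subt_at s p = Fun (f, True) ts)"

definition ann_subterm :: "('f, 'v) aterm \<Rightarrow> ('f, 'v) aterm \<Rightarrow> bool" where
  "ann_subterm t s \<longleftrightarrow> (\<exists>p. annotated_at s p \<and> t = flat (subt_at s p))"

fun wf_trm :: "('f \<times> nat) set \<Rightarrow> ('f, 'v) aterm \<Rightarrow> bool" where
  "wf_trm Sig (Var x) = True"
| "wf_trm Sig (Fun (f, b) ts) = ((f, length ts) \<in> Sig \<and> (\<forall>t \<in> set ts. wf_trm Sig t))"

section \<open>Annotated dependency pairs\<close>

record ('f, 'v) adp =
  lhs :: "('f, 'v) aterm"
  dist :: "(real \<times> ('f, 'v) aterm) multiset"
  flag :: bool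

definition supp :: "('f, 'v) adp \<Rightarrow> ('f, 'v) aterm multiset" where
  "supp a = image_mset snd (dist a)"

definition valid_adp :: "('f \<times> nat) set \<Rightarrow> ('f, 'v) adp \<Rightarrow> bool" where
  "valid_adp Sig a \<longleftrightarrow>
     (\<exists>f ts. lhs a = Fun f ts) \<and> unannotated (lhs a) \<and> wf_trm Sig (lhs a) \<and>
     (\<forall>(p, r) \<in> set_mset (dist a). 0 < p \<and> p \<le> 1 \<and> wf_trm Sig r \<and> vars r \<subseteq> vars (lhs a)) \<and>
     sum_mset (image_mset fst (dist a)) = 1"

type_synonym ('f, 'v) adp_problem = "('f, 'v) adp set \<times> ('f, 'v) adp set"

definition valid_problem :: "('f \<times> nat) set \<Rightarrow> ('f, 'v) adp_problem \<Rightarrow> bool" where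
  "valid_problem Sig PS \<longleftrightarrow> finite (fst PS) \<and> snd PS \<subseteq> fst PS \<and> (\<forall>a \<in> fst PS. valid_adp Sig a)"

definition defined_syms :: "('f, 'v) adp set \<Rightarrow> ('f \<times> bool) set" where
  "defined_syms P = {f. \<exists>a \<in> P. root_sym (lhs a) = Some f}"

definition basic :: "('f \<times> nat) set \<Rightarrow> ('f, 'v) adp set \<Rightarrow> ('f, 'v) aterm \<Rightarrow> bool" where
  "basic Sig P t \<longleftrightarrow> wf_trm Sig t \<and>
     (\<exists>f ts. t = Fun (f, False) ts \<and> (f, False) \<in> defined_syms P \<and>
        (\<forall>u \<in> set ts. \<forall>(g, b) \<in> syms u. b = False \<and> (g, False) \<notin> defined_syms P))"

section \<open>Innermost rewriting with ADPs\<close>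

definition NF :: "('f, 'v) adp set \<Rightarrow> ('f, 'v) aterm \<Rightarrow> bool" where
  "NF P u \<longleftrightarrow> (\<forall>p \<in> poss u. \<forall>a \<in> P. \<forall>\<sigma>. flat (subt_at u p) \<noteq> subst \<sigma> (lhs a))"

text \<open>Cases: (at) flag true, p annotated; (af) flag false, p annotated;
         (nt) flag true, p not annotated; (nf) flag false, p not annotated.\<close>
definition step_result ::
  "('f, 'v) aterm \<Rightarrow> nat list \<Rightarrow> ('f, 'v) adp \<Rightarrow> ('v \<Rightarrow> ('f, 'v) aterm) \<Rightarrow> ('f, 'v) aterm \<Rightarrow> ('f, 'v) aterm" where
  "step_result s p a \<sigma> r =
     (let r' = (if annotated_at s p then r else flat r);
          s' = replace_at s p (subst \<sigma> r')
      in if flag a then s' else flat_up p s')"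

definition innermost_redex ::
  "('f, 'v) adp set \<Rightarrow> ('f, 'v) aterm \<Rightarrow> nat list \<Rightarrow> ('f, 'v) adp \<Rightarrow> ('v \<Rightarrow> ('f, 'v) aterm) \<Rightarrow> bool" where
  "innermost_redex P s p a \<sigma> \<longleftrightarrow>
     a \<in> P \<and> p \<in> poss s \<and>
     (annotated_at s p \<or> (\<exists>f. root_sym (subt_at s p) = Some f \<and> f \<in> defined_syms P)) \<and>
     flat (subt_at s p) = subst \<sigma> (lhs a) \<and>
     (\<forall>q \<in> poss (flat (subt_at s p)). q \<noteq> [] \<longrightarrow> NF P (subt_at (flat (subt_at s p)) q))"

section \<open>Chain trees\<close>

record ('f, 'v) ctree =
  ct_nodes :: "nat list set"
  ct_prob :: "nat list \<Rightarrow> real"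
  ct_term :: "nat list \<Rightarrow> ('f, 'v) aterm"
  ct_pos :: "nat list \<Rightarrow> nat list"
  ct_rule :: "nat list \<Rightarrow> ('f, 'v) adp"

definition ct_inner :: "('f, 'v) ctree \<Rightarrow> nat list \<Rightarrow> bool" where
  "ct_inner T v \<longleftrightarrow> v \<in> ct_nodes T \<and> (\<exists>i. v @ [i] \<in> ct_nodes T)"

text \<open>A P-chain tree: nodes are addressed by paths; children of v are v@[i], i < number of children
  (finitely branching); inner nodes record the ADP and position of the rewrite step used.\<close>
definition chain_tree :: "('f, 'v) adp set \<Rightarrow> ('f, 'v) ctree \<Rightarrow> bool" where
  "chain_tree P T \<longleftrightarrow>
     [] \<in> ct_nodes T \<and> ct_prob T [] = 1 \<and>
     (\<forall>v i. v @ [i] \<in> ct_nodes T \<longrightarrow> v \<in> ct_nodes T) \<and>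
     (\<forall>v. ct_inner T v \<longrightarrow>
        (let s = ct_term T v; p = ct_pos T v; a = ct_rule T v in
         \<exists>\<sigma> rs. innermost_redex P s p a \<sigma> \<and> mset rs = dist a \<and>
           (\<forall>i. v @ [i] \<in> ct_nodes T \<longleftrightarrow> i < length rs) \<and>
           (\<forall>i < length rs. ct_prob T (v @ [i]) = ct_prob T v * fst (rs ! i) \<and>
                            ct_term T (v @ [i]) = step_result s p a \<sigma> (snd (rs ! i)))))"

definition edl :: "('f, 'v) adp set \<Rightarrow> ('f, 'v) ctree \<Rightarrow> ennreal" where
  "edl S T = (\<Sum>\<^sub>\<infinity> v \<in> {v. ct_inner T v \<and> ct_rule T v \<in> S \<and> annotated_at (ct_term T v) (ct_pos T v)}.
                 ennreal (ct_prob T v))"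

definition edh :: "('f, 'v) adp set \<Rightarrow> ('f, 'v) adp set \<Rightarrow> ('f, 'v) aterm \<Rightarrow> ennreal" where
  "edh P S t = (SUP T \<in> {T. chain_tree P T \<and> ct_term T [] = sharp t}. edl S T)"

section \<open>Complexities\<close>

datatype cplx = Pol nat | Exp | TwoExp | Fin | Omega

fun ckey :: "cplx \<Rightarrow> nat \<times> nat" where
  "ckey (Pol a) = (0, a)"
| "ckey Exp = (1, 0)"
| "ckey TwoExp = (2, 0)"
| "ckey Fin = (3, 0)"
| "ckey Omega = (4, 0)"

definition cle :: "cplx \<Rightarrow> cplx \<Rightarrow> bool" where
  "cle x y \<longleftrightarrow> fst (ckey x) < fst (ckey y) \<or> (fst (ckey x) = fst (ckey y) \<and> snd (ckey x) \<le> snd (ckey y))"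

definition cmax :: "cplx \<Rightarrow> cplx \<Rightarrow> cplx" where
  "cmax x y = (if cle x y then y else x)"

definition cmax_list :: "cplx list \<Rightarrow> cplx" where
  "cmax_list xs = foldr cmax xs (Pol 0)"

definition bigO_pol :: "(nat \<Rightarrow> ennreal) \<Rightarrow> nat \<Rightarrow> bool" where
  "bigO_pol f a \<longleftrightarrow> (\<exists>c::real. \<forall>\<^sub>F n in sequentially. f n \<le> ennreal (c * real n ^ a))"

definition bigO_exp :: "(nat \<Rightarrow> ennreal) \<Rightarrow> bool" where
  "bigO_exp f \<longleftrightarrow> (\<exists>(c::real) (d::nat). \<forall>\<^sub>F n in sequentially. f n \<le> ennreal (c * 2 ^ (n ^ d)))"

definition bigO_2exp :: "(nat \<Rightarrow> ennreal) \<Rightarrow> bool" where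
  "bigO_2exp f \<longleftrightarrow> (\<exists>(c::real) (d::nat). \<forall>\<^sub>F n in sequentially. f n \<le> ennreal (c * 2 ^ (2 ^ (n ^ d))))"

definition iota :: "(nat \<Rightarrow> ennreal) \<Rightarrow> cplx" where
  "iota f = (if \<exists>a. bigO_pol f a then Pol (LEAST a. bigO_pol f a)
             else if bigO_exp f then Exp
             else if bigO_2exp f then TwoExp
             else if (\<forall>n. f n \<noteq> \<infinity>) then Fin
             else Omega)"

definition iota_problem :: "('f \<times> nat) set \<Rightarrow> ('f, 'v) adp set \<Rightarrow> ('f, 'v) adp set \<Rightarrow> cplx" where
  "iota_problem Sig P S =
     iota (\<lambda>n. SUP t \<in> {t. basic Sig P t \<and> tsize t \<le> n}. edh P S t)"

section \<open>Usable rules\<close>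

definition Rules :: "('f, 'v) adp set \<Rightarrow> 'f \<times> bool \<Rightarrow> ('f, 'v) adp set" where
  "Rules P f = {a \<in> P. flag a \<and> root_sym (lhs a) = Some f}"

text \<open>usable_in P t a: a \<in> U_P(t) (least solution of the recursive equations)\<close>
inductive usable_in :: "('f, 'v) adp set \<Rightarrow> ('f, 'v) aterm \<Rightarrow> ('f, 'v) adp \<Rightarrow> bool" where
  root: "a \<in> Rules P f \<Longrightarrow> usable_in P (Fun f ts) a"
| arg: "j < length ts \<Longrightarrow> usable_in (P - Rules P f) (ts ! j) a \<Longrightarrow> usable_in P (Fun f ts) a"
| rhs: "b \<in> Rules P f \<Longrightarrow> r \<in># supp b \<Longrightarrow> usable_in (P - Rules P f) (flat r) a
          \<Longrightarrow> usable_in P (Fun f ts) a"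

definition U :: "('f, 'v) adp set \<Rightarrow> ('f, 'v) adp set" where
  "U P = {a. \<exists>b \<in> P. \<exists>r. r \<in># supp b \<and> (\<exists>t. ann_subterm t r \<and> usable_in P (sharp t) a)}"

definition proc_UR :: "('f, 'v) adp_problem \<Rightarrow> cplx \<times> ('f, 'v) adp_problem list" where
  "proc_UR PS =
     (let P = fst PS; S = snd PS;
          P' = U P \<union> {a\<lparr>flag := False\<rparr> | a. a \<in> P - U P};
          S' = (S \<inter> U P) \<union> {a\<lparr>flag := False\<rparr> | a. a \<in> S - U P}
      in (Pol 0, [(P', S')]))"

section \<open>Proof trees and soundness\<close>

datatype ('f, 'v) ptree = PT "('f, 'v) adp_problem" cplx "('f, 'v) ptree list"

fun pt_A :: "('f, 'v) ptree \<Rightarrow> ('f, 'v) adp_problem" where "pt_A (PT A c cs) = A"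
fun pt_C :: "('f, 'v) ptree \<Rightarrow> cplx" where "pt_C (PT A c cs) = c"
fun pt_children :: "('f, 'v) ptree \<Rightarrow> ('f, 'v) ptree list" where "pt_children (PT A c cs) = cs"

fun pt_is_path :: "nat list \<Rightarrow> ('f, 'v) ptree \<Rightarrow> bool" where
  "pt_is_path [] T = True"
| "pt_is_path (i # p) (PT A c cs) = (i < length cs \<and> pt_is_path p (cs ! i))"

definition pt_paths :: "('f, 'v) ptree \<Rightarrow> nat list set" where
  "pt_paths T = {p. pt_is_path p T}"

fun pt_sub :: "('f, 'v) ptree \<Rightarrow> nat list \<Rightarrow> ('f, 'v) ptree" where
  "pt_sub T [] = T"
| "pt_sub (PT A c cs) (i # p) = pt_sub (cs ! i) p"

text \<open>L_C(v_1) + ... + L_C(v_{k-1}) along the root path to v (empty maximum = Pol_0)\<close>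
definition pt_anc :: "('f, 'v) ptree \<Rightarrow> nat list \<Rightarrow> cplx" where
  "pt_anc T v = cmax_list (map (\<lambda>j. pt_C (pt_sub T (take j v))) [0..<length v])"

definition iota_of :: "('f \<times> nat) set \<Rightarrow> ('f, 'v) adp_problem \<Rightarrow> cplx" where
  "iota_of Sig PS = iota_problem Sig (fst PS) (snd PS)"

definition pt_Lprime :: "('f \<times> nat) set \<Rightarrow> ('f, 'v) ptree \<Rightarrow> cplx" where
  "pt_Lprime Sig T = (if pt_children T = [] then iota_of Sig (pt_A T) else pt_C T)"

fun pt_reach_max :: "('f \<times> nat) set \<Rightarrow> ('f, 'v) ptree \<Rightarrow> cplx" where
  "pt_reach_max Sig (PT A c cs) = cmax (pt_Lprime Sig (PT A c cs)) (cmax_list (map (pt_reach_max Sig) cs))"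

definition proof_tree :: "('f \<times> nat) set \<Rightarrow> ('f, 'v) ptree \<Rightarrow> bool" where
  "proof_tree Sig T \<longleftrightarrow>
     (\<forall>v \<in> pt_paths T. valid_problem Sig (pt_A (pt_sub T v)) \<and>
        (pt_children (pt_sub T v) = [] \<longrightarrow>
           pt_C (pt_sub T v) = (if snd (pt_A (pt_sub T v)) = {} then Pol 0 else Omega)))"

definition well_formed :: "('f \<times> nat) set \<Rightarrow> ('f, 'v) ptree \<Rightarrow> bool" where
  "well_formed Sig T \<longleftrightarrow> proof_tree Sig T \<and>
     (\<forall>v \<in> pt_paths T.
        (let (P, S) = pt_A (pt_sub T v) in
          cle (iota_problem Sig P S) (cmax (pt_anc T v) (pt_reach_max Sig (pt_sub T v))) \<and>
          cle (iota_problem Sig P (P - S)) (pt_anc T v)))"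

definition sound_proc ::
  "('f \<times> nat) set \<Rightarrow> (('f, 'v) adp_problem \<Rightarrow> cplx \<times> ('f, 'v) adp_problem list) \<Rightarrow> bool" where
  "sound_proc Sig Proc \<longleftrightarrow>
     (\<forall>T v. well_formed Sig T \<longrightarrow> v \<in> pt_paths T \<longrightarrow>
        (let (P, S) = pt_A (pt_sub T v); (c, ps) = Proc (P, S) in
          cle (iota_problem Sig P S)
              (cmax_list ([pt_anc T v, c] @ map (iota_of Sig) ps)) \<and>
          (\<forall>(Pi, Si) \<in> set ps. cle (iota_problem Sig Pi (Pi - Si)) (cmax (pt_anc T v) c))))"

end

(*
  Below an annotation, a chain tree that starts from a basic term never applies a non-usable
  ADP. The invariant is: for every annotated symbol, each subterm of its (flattened) arguments
  that is not a normal form has a root symbol all of whose flag-true ADPs are usable. It holds at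
  the root because the arguments of a basic term are normal forms, and rewriting preserves it
  because the usable ADPs are closed under the symbols of their right-hand sides and under the
  symbols below the annotations of right-hand sides. Hence a flag-true non-usable ADP is only
  applied at positions without annotated ancestors, where its flag makes no difference to the
  result. Toggling the flags of the non-usable ADPs therefore turns P-chain trees into
  P'-chain trees and back, with the same terms and probabilities and the same (at)/(af)-steps,
  so edh, and with it the complexity, is preserved in both directions required for soundness.
*)
theory Submission
  imports Defs
begin

section \<open>Terms, substitutions and ADPs\<close>

lemma flat_idem [simp]: "flat (flat t) = flat t"
  by (induction t rule: flat.induct) (auto simp: map_idI)

lemma vars_flat [simp]: "vars (flat t) = vars t"
  by (induction t rule: flat.induct) auto

lemma flat_subst: "flat (subst \<sigma> t) = subst (\<lambda>x. flat (\<sigma> x)) (flat t)"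
  by (induction t rule: flat.induct) auto

lemma subst_cong: "(\<And>x. x \<in> vars t \<Longrightarrow> \<sigma> x = \<tau> x) \<Longrightarrow> subst \<sigma> t = subst \<tau> t"
  by (induction t) auto

lemma unannotated_flat_id: "unannotated t \<Longrightarrow> flat t = t"
  unfolding unannotated_def by (induction t rule: flat.induct) (auto simp: map_idI)

lemma flat_Fun_id_arg: "flat (Fun h ts) = Fun h ts \<Longrightarrow> u \<in> set ts \<Longrightarrow> flat u = u"
  by (cases h) (auto simp: map_eq_conv[where g = id, simplified])

lemma flat_subst_id_var:
  "flat (subst \<sigma> l) = subst \<sigma> l \<Longrightarrow> x \<in> vars l \<Longrightarrow> flat (\<sigma> x) = \<sigma> x"
proof (induction l)
  case (Fun fb ts)
  then obtain t where "t \<in> set ts" "x \<in> vars t" by auto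
  moreover have "flat (subst \<sigma> t) = subst \<sigma> t" if "t \<in> set ts"
    using flat_Fun_id_arg[of _ "map (subst \<sigma>) ts"] Fun.prems(1) that by simp
  ultimately show ?case using Fun.IH by blast
qed simp

lemma poss_simps [simp]:
  "[] \<in> poss t"
  "i # p \<in> poss (Fun f ts) \<longleftrightarrow> i < length ts \<and> p \<in> poss (ts ! i)"
  "i # p \<notin> poss (Var x)"
  by (auto simp: poss_def)

lemma poss_flat [simp]: "poss (flat t) = poss t"
proof -
  have "is_pos p (flat t) = is_pos p t" for p
  proof (induction p arbitrary: t)
    case (Cons i p)
    show ?case
    proof (cases t rule: flat.cases)
      case (2 f b ts)
      then show ?thesis by (cases "i < length ts") (simp_all add: Cons.IH)
    qed simp
  qed simp
  then show ?thesis by (auto simp: poss_def)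
qed

lemma subt_at_flat: "p \<in> poss t \<Longrightarrow> subt_at (flat t) p = flat (subt_at t p)"
proof (induction p arbitrary: t)
  case (Cons i p)
  then obtain f b ts where "t = Fun (f, b) ts" by (cases t) auto
  with Cons show ?case by auto
qed simp

lemma flat_replace_at:
  "p \<in> poss t \<Longrightarrow> flat (replace_at t p w) = replace_at (flat t) p (flat w)"
proof (induction p arbitrary: t)
  case (Cons i p)
  then obtain f b ts where "t = Fun (f, b) ts" by (cases t) auto
  with Cons show ?case by (auto simp: map_update)
qed simp

lemma subt_at_flat_id: "flat t = t \<Longrightarrow> p \<in> poss t \<Longrightarrow> flat (subt_at t p) = subt_at t p"
  by (metis subt_at_flat)

lemma syms_subt_at: "p \<in> poss t \<Longrightarrow> subt_at t p = Fun g us \<Longrightarrow> g \<in> syms t"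
proof (induction p arbitrary: t)
  case (Cons i p)
  then obtain h ts where "t = Fun h ts" by (cases t) auto
  with Cons show ?case using nth_mem by fastforce
qed auto

lemma var_pos: "x \<in> vars t \<Longrightarrow> \<exists>q \<in> poss t. subt_at t q = Var x"
proof (induction t)
  case (Fun f ts)
  then obtain i where "i < length ts" "x \<in> vars (ts ! i)" by (auto simp: in_set_conv_nth)
  with Fun.IH show ?case by (metis nth_mem poss_simps(2) subt_at.simps(2))
qed (metis poss_simps(1) subt_at.simps(1) singletonD vars.simps(1))

lemma subt_at_subst:
  "q \<in> poss t \<Longrightarrow> q \<in> poss (subst \<sigma> t) \<and> subt_at (subst \<sigma> t) q = subst \<sigma> (subt_at t q)"
proof (induction q arbitrary: t)
  case (Cons i q)
  then obtain f ts where "t = Fun f ts" by (cases t) auto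
  with Cons show ?case by auto
qed simp

definition variable_condition :: "('f, 'v) adp \<Rightarrow> bool" where
  "variable_condition a \<longleftrightarrow>
     (\<exists>f ts. lhs a = Fun f ts) \<and> (\<forall>r. r \<in># supp a \<longrightarrow> vars r \<subseteq> vars (lhs a))"

lemma variable_condition_if_valid_adp: "valid_adp Sig a \<Longrightarrow> variable_condition a"
  unfolding valid_adp_def variable_condition_def supp_def by fastforce

lemma supp_flag_update [simp]: "supp (a\<lparr>flag := m\<rparr>) = supp a"
  by (simp add: supp_def)

lemma variable_condition_flag_update [simp]: "variable_condition (a\<lparr>flag := m\<rparr>) = variable_condition a"
  by (simp add: variable_condition_def)

section \<open>Normal forms and innermost redexes\<close>

lemma NF_arg: "NF P (Fun g us) \<Longrightarrow> u \<in> set us \<Longrightarrow> NF P u"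
  unfolding NF_def by (metis in_set_conv_nth poss_simps(2) subt_at.simps(2))

lemma NF_subt_at: "NF P u \<Longrightarrow> p \<in> poss u \<Longrightarrow> NF P (subt_at u p)"
proof (induction p arbitrary: u)
  case (Cons i p)
  from Cons.prems(2) obtain h ts where u: "u = Fun h ts" "i < length ts" "p \<in> poss (ts ! i)"
    by (cases u) auto
  with Cons.prems(1) have "NF P (ts ! i)" using NF_arg nth_mem by blast
  with Cons.IH u show ?case by simp
qed simp

lemma not_NF_if_matches: "a \<in> P \<Longrightarrow> flat u = subst \<sigma> (lhs a) \<Longrightarrow> \<not> NF P u"
  unfolding NF_def by (metis poss_simps(1) subt_at.simps(1))

lemma NF_lhs_image: "NF P u \<longleftrightarrow> (\<forall>p \<in> poss u. \<forall>l \<in> lhs ` P. \<forall>\<sigma>. flat (subt_at u p) \<noteq> subst \<sigma> l)"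
  unfolding NF_def by blast

lemma defined_syms_lhs_image: "defined_syms P = {f. \<exists>l \<in> lhs ` P. root_sym l = Some f}"
  unfolding defined_syms_def by blast

lemma innermost_redex_lhs_cong:
  assumes "innermost_redex Q s p a \<sigma>" "b \<in> Q'" "lhs b = lhs a" "lhs ` Q' = lhs ` Q"
  shows "innermost_redex Q' s p b \<sigma>"
proof -
  have NF: "NF Q' = NF Q" and defined: "defined_syms Q' = defined_syms Q"
    using assms(4) by (simp_all add: fun_eq_iff NF_lhs_image defined_syms_lhs_image)
  show ?thesis
    using assms(1-3) unfolding innermost_redex_def NF defined by metis
qed

lemma NF_if_no_defined_syms:
  assumes "\<forall>a \<in> P. variable_condition a" "unannotated u" "syms u \<inter> defined_syms P = {}"
  shows "NF P u"
  unfolding NF_def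
proof (intro ballI allI notI)
  fix p a \<sigma> assume p: "p \<in> poss u" and a: "a \<in> P" and eq: "flat (subt_at u p) = subst \<sigma> (lhs a)"
  obtain g ls where l: "lhs a = Fun g ls" using assms(1) a unfolding variable_condition_def by blast
  have "subt_at u p = Fun g (map (subst \<sigma>) ls)"
    using eq l subt_at_flat_id[OF unannotated_flat_id[OF assms(2)] p] by simp
  then have "g \<in> syms u" using syms_subt_at[OF p] by blast
  moreover have "g \<in> defined_syms P" unfolding defined_syms_def using a l by force
  ultimately show False using assms(3) by blast
qed

lemma innermost_redex_subst_NF:
  assumes "innermost_redex Q s p a \<sigma>" "variable_condition a" "x \<in> vars (lhs a)"
  shows "NF Q (\<sigma> x) \<and> flat (\<sigma> x) = \<sigma> x"
proof
  from assms(1) have m: "flat (subt_at s p) = subst \<sigma> (lhs a)"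
    and "\<forall>q \<in> poss (flat (subt_at s p)). q \<noteq> [] \<longrightarrow> NF Q (subt_at (flat (subt_at s p)) q)"
    unfolding innermost_redex_def by blast+
  then have inner: "\<forall>q \<in> poss (subst \<sigma> (lhs a)). q \<noteq> [] \<longrightarrow> NF Q (subt_at (subst \<sigma> (lhs a)) q)"
    by simp
  have "flat (subst \<sigma> (lhs a)) = subst \<sigma> (lhs a)" using flat_idem[of "subt_at s p"] unfolding m .
  then show "flat (\<sigma> x) = \<sigma> x" by (rule flat_subst_id_var[OF _ assms(3)])
  from var_pos[OF assms(3)] obtain q where q: "q \<in> poss (lhs a)" "subt_at (lhs a) q = Var x" ..
  moreover have "q \<noteq> []" using q assms(2) unfolding variable_condition_def by auto
  ultimately show "NF Q (\<sigma> x)" using inner subt_at_subst[OF q(1), of \<sigma>] by (metis subst.simps(1))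
qed

section \<open>Usable rules\<close>

lemma Rules_diff: "a \<in> Rules P g \<Longrightarrow> a \<notin> Rules P f \<Longrightarrow> a \<in> Rules (P - Rules P f) g"
  by (auto simp: Rules_def)

lemma usable_in_if_sym: "g \<in> syms t \<Longrightarrow> a \<in> Rules P g \<Longrightarrow> usable_in P t a"
proof (induction t arbitrary: P)
  case (Fun f ts)
  show ?case
  proof (cases "a \<in> Rules P f")
    case False
    with Fun.prems obtain j where j: "j < length ts" "g \<in> syms (ts ! j)"
      by (auto simp: in_set_conv_nth)
    with Fun.IH[OF nth_mem _ Rules_diff[OF Fun.prems(2) False]] show ?thesis
      by (blast intro: usable_in.arg)
  qed (rule usable_in.root)
qed simp

lemma usable_in_rhs_closed:
  "usable_in P t c \<Longrightarrow> r \<in># supp c \<Longrightarrow> g \<in> syms (flat r) \<Longrightarrow> d \<in> Rules P g \<Longrightarrow> usable_in P t d"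
proof (induction rule: usable_in.induct)
  case (root c P f ts)
  then show ?case
    by (metis Rules_diff usable_in.rhs usable_in.root usable_in_if_sym)
next
  case (arg j ts P f c)
  then show ?case by (metis Rules_diff usable_in.arg usable_in.root)
next
  case (rhs b P f r' c ts)
  then show ?case by (metis Rules_diff usable_in.rhs usable_in.root)
qed

lemma usable_in_Rules: "usable_in P t a \<Longrightarrow> a \<in> P \<and> flag a"
  by (induction rule: usable_in.induct) (auto simp: Rules_def)

lemma U_memD: "a \<in> U P \<Longrightarrow> a \<in> P \<and> flag a"
  unfolding U_def using usable_in_Rules by blast

section \<open>Usable rules below annotations\<close>

definition rhs_closed :: "('f, 'v) adp set \<Rightarrow> ('f, 'v) adp set \<Rightarrow> bool" where
  "rhs_closed P X \<longleftrightarrow> (\<forall>c \<in> X. \<forall>r. r \<in># supp c \<longrightarrow> (\<forall>g \<in> syms (flat r). Rules P g \<subseteq> X))"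

lemma U_rhs_closed: "rhs_closed P (U P)"
  unfolding rhs_closed_def U_def using usable_in_rhs_closed by blast

fun reducible_rules_in :: "('f, 'v) adp set \<Rightarrow> ('f, 'v) adp set \<Rightarrow> ('f, 'v) aterm \<Rightarrow> bool" where
  "reducible_rules_in P X (Var x) = True"
| "reducible_rules_in P X (Fun g us) =
     ((\<not> NF P (Fun g us) \<longrightarrow> Rules P g \<subseteq> X) \<and> (\<forall>u \<in> set us. reducible_rules_in P X u))"

fun ann_reducible_rules_in :: "('f, 'v) adp set \<Rightarrow> ('f, 'v) adp set \<Rightarrow> ('f, 'v) aterm \<Rightarrow> bool" where
  "ann_reducible_rules_in P X (Var x) = True"
| "ann_reducible_rules_in P X (Fun (f, b) ts) =
     ((b \<longrightarrow> (\<forall>t \<in> set ts. reducible_rules_in P X (flat t))) \<and>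
      (\<forall>t \<in> set ts. ann_reducible_rules_in P X t))"

fun ann_syms_rules_in :: "('f, 'v) adp set \<Rightarrow> ('f, 'v) adp set \<Rightarrow> ('f, 'v) aterm \<Rightarrow> bool" where
  "ann_syms_rules_in P X (Var x) = True"
| "ann_syms_rules_in P X (Fun (f, b) ts) =
     ((b \<longrightarrow> (\<forall>t \<in> set ts. \<forall>g \<in> syms (flat t). Rules P g \<subseteq> X)) \<and>
      (\<forall>t \<in> set ts. ann_syms_rules_in P X t))"

lemma reducible_rules_in_if_NF: "NF P u \<Longrightarrow> reducible_rules_in P X u"
  by (induction u) (auto dest: NF_arg)

lemma reducible_rules_in_subst:
  "(\<And>g. g \<in> syms t \<Longrightarrow> Rules P g \<subseteq> X) \<Longrightarrow> (\<And>x. x \<in> vars t \<Longrightarrow> reducible_rules_in P X (\<sigma> x))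
   \<Longrightarrow> reducible_rules_in P X (subst \<sigma> t)"
proof (induction t)
  case (Fun g ts)
  have "reducible_rules_in P X (subst \<sigma> t)" if "t \<in> set ts" for t
    by (rule Fun.IH[OF that]) (use Fun.prems that in fastforce)+
  then show ?case using Fun.prems by auto
qed simp

lemma reducible_rules_in_subt_at:
  "reducible_rules_in P X t \<Longrightarrow> q \<in> poss t \<Longrightarrow> subt_at t q = Fun g us \<Longrightarrow> \<not> NF P (Fun g us)
   \<Longrightarrow> Rules P g \<subseteq> X"
proof (induction q arbitrary: t)
  case (Cons i q)
  from Cons.prems(2) obtain h ts where "t = Fun h ts" "i < length ts" "q \<in> poss (ts ! i)"
    by (cases t) auto
  with Cons.prems Cons.IH[of "ts ! i"] show ?case by simp
qed simp

lemma ann_reducible_rules_in_flat: "ann_reducible_rules_in P X (flat t)"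
  by (induction t rule: flat.induct) auto

lemma ann_syms_rules_in_flat: "ann_syms_rules_in P X (flat t)"
  by (induction t rule: flat.induct) auto

lemma ann_syms_rules_in_if_ann_subterms:
  "(\<And>p f ts. p \<in> poss r \<Longrightarrow> subt_at r p = Fun (f, True) ts \<Longrightarrow> \<forall>t \<in> set ts. \<forall>g \<in> syms (flat t). Rules P g \<subseteq> X)
   \<Longrightarrow> ann_syms_rules_in P X r"
proof (induction r)
  case (Fun fb ts)
  obtain f b where fb: "fb = (f, b)" by (cases fb)
  have "ann_syms_rules_in P X t" if t: "t \<in> set ts" for t
  proof (rule Fun.IH[OF t])
    fix p f' ts' assume "p \<in> poss t" "subt_at t p = Fun (f', True) ts'"
    moreover obtain i where "i < length ts" "ts ! i = t" using t by (auto simp: in_set_conv_nth)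
    ultimately show "\<forall>t \<in> set ts'. \<forall>g \<in> syms (flat t). Rules P g \<subseteq> X"
      using Fun.prems[of "i # p" f' ts'] by auto
  qed
  moreover have "b \<Longrightarrow> \<forall>t \<in> set ts. \<forall>g \<in> syms (flat t). Rules P g \<subseteq> X"
    using Fun.prems[of "[]" f ts] fb by auto
  ultimately show ?case using fb by auto
qed simp

lemma ann_syms_rules_in_U: "b \<in> P \<Longrightarrow> r \<in># supp b \<Longrightarrow> ann_syms_rules_in P (U P) r"
proof (rule ann_syms_rules_in_if_ann_subterms)
  fix p f ts assume b: "b \<in> P" "r \<in># supp b" and p: "p \<in> poss r" "subt_at r p = Fun (f, True) ts"
  have ann: "ann_subterm (flat (subt_at r p)) r"
    unfolding ann_subterm_def annotated_at_def using p by blast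
  have sharp: "sharp (flat (subt_at r p)) = Fun (f, True) (map flat ts)" using p by simp
  show "\<forall>t \<in> set ts. \<forall>g \<in> syms (flat t). Rules P g \<subseteq> U P"
  proof (intro ballI subsetI)
    fix t g a assume "t \<in> set ts" "g \<in> syms (flat t)" "a \<in> Rules P g"
    then have "usable_in P (sharp (flat (subt_at r p))) a"
      unfolding sharp by (intro usable_in_if_sym[of g]) auto
    then show "a \<in> U P" unfolding U_def using b ann by blast
  qed
qed

lemma ann_reducible_rules_in_subst:
  assumes "ann_syms_rules_in P X r"
    and "\<And>x. x \<in> vars r \<Longrightarrow> flat (\<sigma> x) = \<sigma> x \<and> reducible_rules_in P X (\<sigma> x)"
  shows "ann_reducible_rules_in P X (subst \<sigma> r)"
  using assms
proof (induction r)
  case (Var x)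
  then show ?case using ann_reducible_rules_in_flat[of P X "\<sigma> x"] by simp
next
  case (Fun fb ts)
  obtain f b where fb: "fb = (f, b)" by (cases fb)
  have "ann_reducible_rules_in P X (subst \<sigma> t)" if "t \<in> set ts" for t
    by (rule Fun.IH[OF that]) (use Fun.prems fb that in auto)
  moreover have "reducible_rules_in P X (flat (subst \<sigma> t))" if t: "t \<in> set ts" and b for t
  proof -
    have "flat (subst \<sigma> t) = subst (\<lambda>x. flat (\<sigma> x)) (flat t)" by (rule flat_subst)
    also have "\<dots> = subst \<sigma> (flat t)"
      by (rule subst_cong) (use Fun.prems t in auto)
    finally have "flat (subst \<sigma> t) = subst \<sigma> (flat t)" .
    moreover have "reducible_rules_in P X (subst \<sigma> (flat t))"
    proof (rule reducible_rules_in_subst)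
      show "Rules P g \<subseteq> X" if "g \<in> syms (flat t)" for g
        using Fun.prems(1) fb t \<open>b\<close> that by simp
      show "reducible_rules_in P X (\<sigma> x)" if "x \<in> vars (flat t)" for x
        using Fun.prems(2) t that by auto
    qed
    ultimately show ?thesis by simp
  qed
  ultimately show ?case using fb by auto
qed

text \<open>Every ancestor of the redex is reducible, so its rules already lie in X; the symbols of
  the contractum have their rules in X because X is closed under right-hand sides.\<close>

lemma reducible_rules_in_replace_at:
  assumes "rhs_closed P X" "a \<in> P" "flag a" "variable_condition a" "r \<in># supp a"
    and \<sigma>: "\<And>x. x \<in> vars (lhs a) \<Longrightarrow> reducible_rules_in P X (\<sigma> x)"
  shows "reducible_rules_in P X t \<Longrightarrow> flat t = t \<Longrightarrow> q \<in> poss t \<Longrightarrow> subt_at t q = subst \<sigma> (lhs a)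
    \<Longrightarrow> reducible_rules_in P X (replace_at t q (subst \<sigma> (flat r)))"
proof (induction q arbitrary: t)
  case Nil
  from assms(4) obtain f ls where l: "lhs a = Fun f ls" unfolding variable_condition_def by blast
  with Nil have "\<not> NF P (Fun f (map (subst \<sigma>) ls))"
    using not_NF_if_matches[OF assms(2)] by fastforce
  with Nil l have "Rules P f \<subseteq> X" by simp
  moreover have "a \<in> Rules P f" using assms(2,3) l by (simp add: Rules_def)
  ultimately have "a \<in> X" by blast
  have "reducible_rules_in P X (subst \<sigma> (flat r))"
  proof (rule reducible_rules_in_subst)
    show "Rules P g \<subseteq> X" if "g \<in> syms (flat r)" for g
      using assms(1,5) \<open>a \<in> X\<close> that unfolding rhs_closed_def by blast
    show "reducible_rules_in P X (\<sigma> x)" if "x \<in> vars (flat r)" for x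
      using assms(4,5) \<sigma> that unfolding variable_condition_def by auto
  qed
  then show ?case by simp
next
  case (Cons i q)
  from Cons.prems(3) obtain h ts where t: "t = Fun h ts" "i < length ts" "q \<in> poss (ts ! i)"
    by (cases t) auto
  have "flat (ts ! i) = ts ! i" using flat_Fun_id_arg Cons.prems(2) t nth_mem by metis
  moreover have "reducible_rules_in P X (ts ! i)" using Cons.prems(1) t by simp
  ultimately have IH: "reducible_rules_in P X (replace_at (ts ! i) q (subst \<sigma> (flat r)))"
    using Cons.IH Cons.prems(4) t by simp
  have "\<not> NF P (subt_at t (i # q))"
    using not_NF_if_matches[OF assms(2)] Cons.prems subt_at_flat_id by metis
  then have "\<not> NF P t" using NF_subt_at Cons.prems(3) by blast
  with Cons.prems(1) t IH show ?case by (auto dest: set_update_subset_insert[THEN subsetD])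
qed

lemma ann_reducible_rules_in_replace_at:
  assumes "rhs_closed P X" "a \<in> P" "flag a" "variable_condition a" "r \<in># supp a"
    and "\<And>x. x \<in> vars (lhs a) \<Longrightarrow> reducible_rules_in P X (\<sigma> x)"
    and "ann_reducible_rules_in P X w" "flat w = subst \<sigma> (flat r)"
  shows "ann_reducible_rules_in P X s \<Longrightarrow> p \<in> poss s \<Longrightarrow> flat (subt_at s p) = subst \<sigma> (lhs a)
    \<Longrightarrow> ann_reducible_rules_in P X (replace_at s p w)"
proof (induction p arbitrary: s)
  case (Cons i p)
  from Cons.prems(2) obtain f b ts where s: "s = Fun (f, b) ts" "i < length ts" "p \<in> poss (ts ! i)"
    by (cases s rule: flat.cases) auto
  have IH: "ann_reducible_rules_in P X (replace_at (ts ! i) p w)"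
    using Cons.IH Cons.prems s by simp
  have "reducible_rules_in P X (flat (replace_at (ts ! i) p w))" if b
  proof -
    have "flat (replace_at (ts ! i) p w) = replace_at (flat (ts ! i)) p (subst \<sigma> (flat r))"
      using flat_replace_at[OF s(3)] assms(8) by simp
    moreover have "reducible_rules_in P X (flat (ts ! i))" using Cons.prems(1) s that by simp
    moreover have "subt_at (flat (ts ! i)) p = subst \<sigma> (lhs a)"
      using subt_at_flat[OF s(3)] Cons.prems(3) s by simp
    ultimately show ?thesis
      using reducible_rules_in_replace_at[OF assms(1-6)] s(3) by simp
  qed
  with Cons.prems(1) s IH show ?case by (auto dest: set_update_subset_insert[THEN subsetD])
qed (use assms(7) in simp)

lemma ann_reducible_rules_in_flat_up_replace_at:
  "ann_reducible_rules_in P X s \<Longrightarrow> p \<in> poss s \<Longrightarrow> ann_reducible_rules_in P X w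
   \<Longrightarrow> ann_reducible_rules_in P X (flat_up p (replace_at s p w))"
proof (induction p arbitrary: s)
  case (Cons i p)
  from Cons.prems(2) obtain f b ts where s: "s = Fun (f, b) ts" "i < length ts" "p \<in> poss (ts ! i)"
    by (cases s rule: flat.cases) auto
  with Cons have "ann_reducible_rules_in P X (flat_up p (replace_at (ts ! i) p w))" by simp
  with Cons.prems(1) s show ?case by (auto dest: set_update_subset_insert[THEN subsetD])
qed simp

text \<open>A redex of a flag-true ADP outside X has no annotated ancestor, so rewriting it with
  flag true or with flag false gives the same term.\<close>

lemma flat_up_replace_at_id:
  assumes "a \<in> P" "flag a" "a \<notin> X" "variable_condition a"
  shows "ann_reducible_rules_in P X s \<Longrightarrow> p \<in> poss s \<Longrightarrow> flat (subt_at s p) = subst \<sigma> (lhs a)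
    \<Longrightarrow> flat_up p (replace_at s p w) = replace_at s p w"
proof (induction p arbitrary: s)
  case (Cons i p)
  from Cons.prems(2) obtain f b ts where s: "s = Fun (f, b) ts" "i < length ts" "p \<in> poss (ts ! i)"
    by (cases s rule: flat.cases) auto
  have "\<not> b"
  proof
    assume b
    obtain g ls where l: "lhs a = Fun g ls" using assms(4) unfolding variable_condition_def by blast
    have u: "subt_at (flat (ts ! i)) p = subst \<sigma> (lhs a)"
      using subt_at_flat[OF s(3)] Cons.prems(3) s by simp
    then have "\<not> NF P (subt_at (flat (ts ! i)) p)"
      using not_NF_if_matches[OF assms(1)] subt_at_flat_id[of "flat (ts ! i)" p] s(3) by simp
    moreover have "reducible_rules_in P X (flat (ts ! i))" using Cons.prems(1) s \<open>b\<close> by simp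
    ultimately have "Rules P g \<subseteq> X" using reducible_rules_in_subt_at s(3) u l by fastforce
    moreover have "a \<in> Rules P g" using assms(1,2) l by (simp add: Rules_def)
    ultimately show False using assms(3) by blast
  qed
  with Cons s show ?case by simp
qed simp

lemma ann_reducible_rules_in_step_result:
  assumes "rhs_closed P X" "ann_reducible_rules_in P X s" "innermost_redex Q s p a \<sigma>" "NF Q = NF P"
    and "variable_condition a" "r \<in># supp a" "ann_syms_rules_in P X r" "flag a \<Longrightarrow> a \<in> P"
  shows "ann_reducible_rules_in P X (step_result s p a \<sigma> r)"
proof -
  have p: "p \<in> poss s" and m: "flat (subt_at s p) = subst \<sigma> (lhs a)"
    using assms(3) unfolding innermost_redex_def by blast+
  have \<sigma>: "flat (\<sigma> x) = \<sigma> x \<and> reducible_rules_in P X (\<sigma> x)" if "x \<in> vars (lhs a)" for x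
    using innermost_redex_subst_NF[OF assms(3,5) that] assms(4) reducible_rules_in_if_NF by metis
  have vars_r: "vars r \<subseteq> vars (lhs a)" using assms(5,6) unfolding variable_condition_def by blast
  define r' where "r' = (if annotated_at s p then r else flat r)"
  have "vars r' \<subseteq> vars (lhs a)" "ann_syms_rules_in P X r'"
    using vars_r assms(7) by (simp_all add: r'_def ann_syms_rules_in_flat)
  then have contractum: "ann_reducible_rules_in P X (subst \<sigma> r')"
    using ann_reducible_rules_in_subst \<sigma> by blast
  show ?thesis
  proof (cases "flag a")
    case True
    have "flat (subst \<sigma> r') = subst (\<lambda>x. flat (\<sigma> x)) (flat r)" by (simp add: flat_subst r'_def)
    also have "\<dots> = subst \<sigma> (flat r)" by (rule subst_cong) (use \<sigma> vars_r in auto)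
    finally have "ann_reducible_rules_in P X (replace_at s p (subst \<sigma> r'))"
      using ann_reducible_rules_in_replace_at[OF assms(1) assms(8)[OF True] True assms(5,6) _ contractum]
        assms(2) p m \<sigma> by blast
    with True show ?thesis by (simp add: step_result_def r'_def Let_def)
  next
    case False
    with ann_reducible_rules_in_flat_up_replace_at[OF assms(2) p contractum] show ?thesis
      by (simp add: step_result_def r'_def Let_def)
  qed
qed

lemma ann_reducible_rules_in_sharp_basic:
  assumes "\<forall>a \<in> P. variable_condition a" "basic Sig P t"
  shows "ann_reducible_rules_in P X (sharp t)"
proof -
  from assms(2) obtain f ts where t: "t = Fun (f, False) ts"
    and args: "\<forall>u \<in> set ts. \<forall>(g, b) \<in> syms u. b = False \<and> (g, False) \<notin> defined_syms P"
    unfolding basic_def by blast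
  have "flat u = u \<and> NF P u" if "u \<in> set ts" for u
  proof -
    have "unannotated u" using args that unfolding unannotated_def by blast
    moreover have "syms u \<inter> defined_syms P = {}" using args that by fastforce
    ultimately show ?thesis using unannotated_flat_id NF_if_no_defined_syms assms(1) by blast
  qed
  then have "reducible_rules_in P X (flat u) \<and> ann_reducible_rules_in P X u" if "u \<in> set ts" for u
    using that reducible_rules_in_if_NF ann_reducible_rules_in_flat by metis
  then show ?thesis using t by simp
qed

lemma chain_tree_child:
  assumes "chain_tree Q T" "v @ [i] \<in> ct_nodes T"
  obtains \<sigma> r where "v \<in> ct_nodes T" "innermost_redex Q (ct_term T v) (ct_pos T v) (ct_rule T v) \<sigma>"
    "r \<in># supp (ct_rule T v)"
    "ct_term T (v @ [i]) = step_result (ct_term T v) (ct_pos T v) (ct_rule T v) \<sigma> r"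
proof -
  have inner: "ct_inner T v" using assms unfolding chain_tree_def ct_inner_def by blast
  then obtain \<sigma> rs where redex: "innermost_redex Q (ct_term T v) (ct_pos T v) (ct_rule T v) \<sigma>"
    and rs: "mset rs = dist (ct_rule T v)" "\<forall>i. v @ [i] \<in> ct_nodes T \<longleftrightarrow> i < length rs"
    and children: "\<forall>i < length rs. ct_prob T (v @ [i]) = ct_prob T v * fst (rs ! i) \<and>
       ct_term T (v @ [i]) = step_result (ct_term T v) (ct_pos T v) (ct_rule T v) \<sigma> (snd (rs ! i))"
    using assms(1) unfolding chain_tree_def Let_def by blast
  have "i < length rs" using rs(2) assms(2) by blast
  then have "snd (rs ! i) \<in># supp (ct_rule T v)"
    unfolding supp_def rs(1)[symmetric] by (auto intro: nth_mem)
  with that inner redex children \<open>i < length rs\<close> show ?thesis unfolding ct_inner_def by blast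
qed

definition ur_admissible :: "('f, 'v) adp set \<Rightarrow> ('f, 'v) adp set \<Rightarrow> bool" where
  "ur_admissible P Q \<longleftrightarrow> lhs ` Q = lhs ` P \<and>
     (\<forall>a \<in> Q. variable_condition a \<and> (flag a \<longrightarrow> a \<in> P) \<and>
        (\<forall>r. r \<in># supp a \<longrightarrow> ann_syms_rules_in P (U P) r))"

lemma chain_tree_ann_reducible_rules_in:
  assumes "\<forall>a \<in> P. variable_condition a" "ur_admissible P Q"
    and "chain_tree Q T" "ct_term T [] = sharp t" "basic Sig P t"
  shows "v \<in> ct_nodes T \<Longrightarrow> ann_reducible_rules_in P (U P) (ct_term T v)"
proof (induction v rule: rev_induct)
  case Nil
  show ?case using ann_reducible_rules_in_sharp_basic[OF assms(1,5)] assms(4) by simp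
next
  case (snoc i v)
  obtain \<sigma> r where v: "v \<in> ct_nodes T" and
    redex: "innermost_redex Q (ct_term T v) (ct_pos T v) (ct_rule T v) \<sigma>" and
    r: "r \<in># supp (ct_rule T v)" and
    child: "ct_term T (v @ [i]) = step_result (ct_term T v) (ct_pos T v) (ct_rule T v) \<sigma> r"
    using chain_tree_child[OF assms(3) snoc.prems] .
  have "ct_rule T v \<in> Q" using redex unfolding innermost_redex_def by blast
  moreover have "NF Q = NF P"
    using assms(2) by (simp add: ur_admissible_def fun_eq_iff NF_lhs_image)
  ultimately show ?case
    unfolding child using assms(2) r unfolding ur_admissible_def
    by (intro ann_reducible_rules_in_step_result[OF U_rhs_closed snoc.IH[OF v] redex]) auto
qed

section \<open>Relabelling chain trees\<close>

lemma step_result_flag_cong: "flag a = flag b \<Longrightarrow> step_result s p a \<sigma> r = step_result s p b \<sigma> r"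
  by (simp add: step_result_def)

lemma step_result_flag_irrelevant:
  assumes "ann_reducible_rules_in P X s" "p \<in> poss s" "flat (subt_at s p) = subst \<sigma> (lhs c)"
    and "c \<in> P" "flag c" "c \<notin> X" "variable_condition c"
  shows "step_result s p a \<sigma> r = step_result s p b \<sigma> r"
  using flat_up_replace_at_id[OF assms(4-7,1-3)] by (simp add: step_result_def Let_def)

lemma chain_tree_inner_rule: "chain_tree Q T \<Longrightarrow> ct_inner T v \<Longrightarrow> ct_rule T v \<in> Q"
  unfolding ct_inner_def by (metis chain_tree_child innermost_redex_def)

lemma chain_tree_relabel:
  assumes "chain_tree Q T" "lhs ` Q' = lhs ` Q"
    and relabel: "\<And>v \<sigma>. ct_inner T v \<Longrightarrow> innermost_redex Q (ct_term T v) (ct_pos T v) (ct_rule T v) \<sigma> \<Longrightarrow>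
       m (ct_rule T v) \<in> Q' \<and> lhs (m (ct_rule T v)) = lhs (ct_rule T v) \<and>
       dist (m (ct_rule T v)) = dist (ct_rule T v) \<and>
       (\<forall>r. step_result (ct_term T v) (ct_pos T v) (m (ct_rule T v)) \<sigma> r =
            step_result (ct_term T v) (ct_pos T v) (ct_rule T v) \<sigma> r)"
  shows "chain_tree Q' (T\<lparr>ct_rule := \<lambda>v. m (ct_rule T v)\<rparr>)"
proof -
  let ?T' = "T\<lparr>ct_rule := \<lambda>v. m (ct_rule T v)\<rparr>"
  have "\<exists>\<sigma> rs. innermost_redex Q' (ct_term T v) (ct_pos T v) (m (ct_rule T v)) \<sigma> \<and>
      mset rs = dist (m (ct_rule T v)) \<and> (\<forall>i. v @ [i] \<in> ct_nodes T \<longleftrightarrow> i < length rs) \<and>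
      (\<forall>i < length rs. ct_prob T (v @ [i]) = ct_prob T v * fst (rs ! i) \<and>
         ct_term T (v @ [i]) = step_result (ct_term T v) (ct_pos T v) (m (ct_rule T v)) \<sigma> (snd (rs ! i)))"
    if inner: "ct_inner T v" for v
  proof -
    obtain \<sigma> rs where redex: "innermost_redex Q (ct_term T v) (ct_pos T v) (ct_rule T v) \<sigma>"
      and rs: "mset rs = dist (ct_rule T v)" "\<forall>i. v @ [i] \<in> ct_nodes T \<longleftrightarrow> i < length rs"
      "\<forall>i < length rs. ct_prob T (v @ [i]) = ct_prob T v * fst (rs ! i) \<and>
         ct_term T (v @ [i]) = step_result (ct_term T v) (ct_pos T v) (ct_rule T v) \<sigma> (snd (rs ! i))"
      using assms(1) inner unfolding chain_tree_def Let_def by blast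
    note m = relabel[OF inner redex]
    have "innermost_redex Q' (ct_term T v) (ct_pos T v) (m (ct_rule T v)) \<sigma>"
      using innermost_redex_lhs_cong[OF redex _ _ assms(2)] m by blast
    with rs m show ?thesis by (intro exI[of _ \<sigma>] exI[of _ rs]) simp
  qed
  moreover have "ct_inner ?T' v = ct_inner T v" for v by (simp add: ct_inner_def)
  ultimately show ?thesis using assms(1) unfolding chain_tree_def Let_def by simp
qed

lemma edl_relabel_mono:
  assumes "\<And>v. ct_inner T v \<Longrightarrow> ct_rule T v \<in> S \<Longrightarrow> m (ct_rule T v) \<in> S'"
  shows "edl S T \<le> edl S' (T\<lparr>ct_rule := \<lambda>v. m (ct_rule T v)\<rparr>)"
  unfolding edl_def
  by (rule infsum_mono_neutral)
    (use assms in \<open>auto simp: ct_inner_def intro: nonneg_summable_on_complete\<close>)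

text \<open>Flags may only change for ADPs sharing their left-hand side with a flag-true non-usable
  ADP of P, because redexes of those never lie below an annotation.\<close>

lemma edh_le_relabel:
  assumes "\<forall>a \<in> P. variable_condition a" "ur_admissible P Q" "lhs ` Q' = lhs ` Q" "basic Sig P t"
    and relabel: "\<And>a. a \<in> Q \<Longrightarrow> \<exists>b \<in> Q'. lhs b = lhs a \<and> dist b = dist a \<and> (a \<in> S \<longrightarrow> b \<in> S') \<and>
        (flag b = flag a \<or> (\<exists>c \<in> P - U P. flag c \<and> lhs c = lhs a))"
  shows "edh Q S t \<le> edh Q' S' t"
proof -
  obtain m where m: "\<And>a. a \<in> Q \<Longrightarrow> m a \<in> Q' \<and> lhs (m a) = lhs a \<and> dist (m a) = dist a \<and>
      (a \<in> S \<longrightarrow> m a \<in> S') \<and> (flag (m a) = flag a \<or> (\<exists>c \<in> P - U P. flag c \<and> lhs c = lhs a))"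
    using relabel by metis
  show ?thesis unfolding edh_def
  proof (rule SUP_mono)
    fix T assume "T \<in> {T. chain_tree Q T \<and> ct_term T [] = sharp t}"
    then have T: "chain_tree Q T" "ct_term T [] = sharp t" by auto
    let ?T' = "T\<lparr>ct_rule := \<lambda>v. m (ct_rule T v)\<rparr>"
    have "chain_tree Q' ?T'"
    proof (rule chain_tree_relabel[OF T(1) assms(3)])
      fix v \<sigma> assume inner: "ct_inner T v"
        and redex: "innermost_redex Q (ct_term T v) (ct_pos T v) (ct_rule T v) \<sigma>"
      let ?a = "ct_rule T v"
      have a: "?a \<in> Q" using redex unfolding innermost_redex_def by blast
      have "step_result (ct_term T v) (ct_pos T v) (m ?a) \<sigma> r =
            step_result (ct_term T v) (ct_pos T v) ?a \<sigma> r" for r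
      proof (cases "flag (m ?a) = flag ?a")
        case True
        then show ?thesis by (rule step_result_flag_cong)
      next
        case False
        then obtain c where c: "c \<in> P - U P" "flag c" "lhs c = lhs ?a" using m[OF a] by blast
        have "ann_reducible_rules_in P (U P) (ct_term T v)"
          using chain_tree_ann_reducible_rules_in[OF assms(1,2) T assms(4)] inner
          unfolding ct_inner_def by blast
        moreover have "ct_pos T v \<in> poss (ct_term T v)"
          "flat (subt_at (ct_term T v) (ct_pos T v)) = subst \<sigma> (lhs c)"
          using redex c(3) unfolding innermost_redex_def by auto
        ultimately show ?thesis
          using step_result_flag_irrelevant c(1,2) assms(1) by blast
      qed
      with m[OF a] show "m ?a \<in> Q' \<and> lhs (m ?a) = lhs ?a \<and> dist (m ?a) = dist ?a \<and>
          (\<forall>r. step_result (ct_term T v) (ct_pos T v) (m ?a) \<sigma> r =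
               step_result (ct_term T v) (ct_pos T v) ?a \<sigma> r)"
        by blast
    qed
    moreover have "edl S T \<le> edl S' ?T'"
      by (rule edl_relabel_mono) (use m chain_tree_inner_rule[OF T(1)] in blast)
    ultimately show "\<exists>T' \<in> {T. chain_tree Q' T \<and> ct_term T [] = sharp t}. edl S T \<le> edl S' T'"
      using T(2) by force
  qed
qed

section \<open>Complexities\<close>

lemma eventually_le_trans:
  fixes f g h :: "'a \<Rightarrow> 'b::preorder"
  assumes "\<And>n. f n \<le> g n" "\<forall>\<^sub>F n in F. g n \<le> h n"
  shows "\<forall>\<^sub>F n in F. f n \<le> h n"
  using assms(2) by (rule eventually_mono) (rule order_trans[OF assms(1)])

lemma bigO_pol_mono:
  assumes "\<And>n. f n \<le> g n" "bigO_pol g a"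
  shows "bigO_pol f a"
proof -
  from assms(2) obtain c :: real where "\<forall>\<^sub>F n in sequentially. g n \<le> ennreal (c * real n ^ a)"
    unfolding bigO_pol_def ..
  then show ?thesis unfolding bigO_pol_def by (intro exI[of _ c] eventually_le_trans[OF assms(1)])
qed

lemma bigO_exp_mono:
  assumes "\<And>n. f n \<le> g n" "bigO_exp g"
  shows "bigO_exp f"
proof -
  from assms(2) obtain c :: real and d :: nat
    where "\<forall>\<^sub>F n in sequentially. g n \<le> ennreal (c * 2 ^ (n ^ d))"
    unfolding bigO_exp_def by blast
  then show ?thesis
    unfolding bigO_exp_def by (intro exI[of _ c] exI[of _ d] eventually_le_trans[OF assms(1)])
qed

lemma bigO_2exp_mono:
  assumes "\<And>n. f n \<le> g n" "bigO_2exp g"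
  shows "bigO_2exp f"
proof -
  from assms(2) obtain c :: real and d :: nat
    where "\<forall>\<^sub>F n in sequentially. g n \<le> ennreal (c * 2 ^ (2 ^ (n ^ d)))"
    unfolding bigO_2exp_def by blast
  then show ?thesis
    unfolding bigO_2exp_def by (intro exI[of _ c] exI[of _ d] eventually_le_trans[OF assms(1)])
qed

lemma cle_iota_Pol: "bigO_pol f a \<Longrightarrow> cle (iota f) (Pol a)"
proof -
  assume "bigO_pol f a"
  then have "\<exists>a. bigO_pol f a" "(LEAST a. bigO_pol f a) \<le> a" by (auto intro: Least_le)
  then show ?thesis unfolding iota_def cle_def by simp
qed

lemma cle_iota_Exp: "bigO_exp f \<Longrightarrow> cle (iota f) Exp"
  unfolding iota_def cle_def by simp

lemma cle_iota_TwoExp: "bigO_2exp f \<Longrightarrow> cle (iota f) TwoExp"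
  unfolding iota_def cle_def by simp

lemma cle_iota_Fin: "\<forall>n. f n \<noteq> \<infinity> \<Longrightarrow> cle (iota f) Fin"
  unfolding iota_def cle_def by simp

lemma cle_Omega: "cle x Omega"
  by (cases x) (simp_all add: cle_def)

lemma iota_cases:
  obtains (pol) a where "bigO_pol f a" "iota f = Pol a"
  | (exp) "bigO_exp f" "iota f = Exp"
  | (two_exp) "bigO_2exp f" "iota f = TwoExp"
  | (fin) "\<forall>n. f n \<noteq> \<infinity>" "iota f = Fin"
  | (omega) "iota f = Omega"
proof (cases "\<exists>a. bigO_pol f a")
  case True
  then show ?thesis using pol LeastI_ex[OF True] unfolding iota_def by simp
next
  case False
  then show ?thesis using exp two_exp fin omega unfolding iota_def by argo
qed

lemma iota_mono:
  assumes "\<And>n. f n \<le> g n"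
  shows "cle (iota f) (iota g)"
proof (cases g rule: iota_cases)
  case (pol a)
  then show ?thesis using cle_iota_Pol bigO_pol_mono[OF assms] by simp
next
  case exp
  then show ?thesis using cle_iota_Exp bigO_exp_mono[OF assms] by simp
next
  case two_exp
  then show ?thesis using cle_iota_TwoExp bigO_2exp_mono[OF assms] by simp
next
  case fin
  then have "\<forall>n. f n \<noteq> \<infinity>" using assms by (metis infinity_ennreal_def top_unique)
  with fin show ?thesis using cle_iota_Fin by simp
next
  case omega
  then show ?thesis using cle_Omega by simp
qed

lemma cle_trans: "cle x y \<Longrightarrow> cle y z \<Longrightarrow> cle x z"
  by (auto simp: cle_def)

lemma cle_cmax_left: "cle x y \<Longrightarrow> cle x (cmax y z)"
  unfolding cmax_def using cle_trans by auto

lemma cle_cmax_right: "cle x z \<Longrightarrow> cle x (cmax y z)"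
  unfolding cmax_def cle_def by auto

lemma iota_problem_mono:
  assumes "basic Sig P' = basic Sig P" "\<And>t. basic Sig P t \<Longrightarrow> edh P S t \<le> edh P' S' t"
  shows "cle (iota_problem Sig P S) (iota_problem Sig P' S')"
  unfolding iota_problem_def assms(1) by (intro iota_mono SUP_mono) (use assms(2) in auto)

section \<open>Soundness of the usable-rules processor\<close>

definition proc_UR_P :: "('f, 'v) adp set \<Rightarrow> ('f, 'v) adp set" where
  "proc_UR_P P = U P \<union> {a\<lparr>flag := False\<rparr> | a. a \<in> P - U P}"

definition proc_UR_S :: "('f, 'v) adp set \<Rightarrow> ('f, 'v) adp set \<Rightarrow> ('f, 'v) adp set" where
  "proc_UR_S P S = (S \<inter> U P) \<union> {a\<lparr>flag := False\<rparr> | a. a \<in> S - U P}"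

lemma proc_UR_eq: "proc_UR (P, S) = (Pol 0, [(proc_UR_P P, proc_UR_S P S)])"
  by (simp add: proc_UR_def proc_UR_P_def proc_UR_S_def Let_def)

lemma lhs_proc_UR_P: "lhs ` proc_UR_P P = lhs ` P"
proof -
  have "lhs ` proc_UR_P P = lhs ` (U P \<union> (P - U P))"
    unfolding proc_UR_P_def Setcompr_eq_image image_Un image_image by simp
  also have "U P \<union> (P - U P) = P" using U_memD by blast
  finally show ?thesis .
qed

lemma basic_proc_UR_P: "basic Sig (proc_UR_P P) = basic Sig P"
proof -
  have "defined_syms (proc_UR_P P) = defined_syms P"
    by (simp only: defined_syms_lhs_image lhs_proc_UR_P)
  then show ?thesis unfolding basic_def[abs_def] by simp
qed

lemma ur_admissible_self: "\<forall>a \<in> P. variable_condition a \<Longrightarrow> ur_admissible P P"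
  unfolding ur_admissible_def using ann_syms_rules_in_U by blast

lemma ur_admissible_proc_UR_P:
  assumes "\<forall>a \<in> P. variable_condition a"
  shows "ur_admissible P (proc_UR_P P)"
  unfolding ur_admissible_def lhs_proc_UR_P
proof (rule conjI[OF refl], intro ballI)
  fix a assume "a \<in> proc_UR_P P"
  then consider "a \<in> U P" | b where "b \<in> P" "a = b\<lparr>flag := False\<rparr>"
    unfolding proc_UR_P_def by blast
  then show "variable_condition a \<and> (flag a \<longrightarrow> a \<in> P) \<and>
      (\<forall>r. r \<in># supp a \<longrightarrow> ann_syms_rules_in P (U P) r)"
  proof cases
    case 1
    then have "a \<in> P" "flag a" using U_memD by auto
    then show ?thesis using assms ann_syms_rules_in_U by blast
  next
    case 2
    then show ?thesis using assms ann_syms_rules_in_U by auto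
  qed
qed

lemma iota_problem_le_proc_UR:
  assumes "\<forall>a \<in> P. variable_condition a"
  shows "cle (iota_problem Sig P S) (iota_problem Sig (proc_UR_P P) (proc_UR_S P S))"
proof (rule iota_problem_mono[OF basic_proc_UR_P])
  fix t assume "basic Sig P t"
  then show "edh P S t \<le> edh (proc_UR_P P) (proc_UR_S P S) t"
  proof (rule edh_le_relabel[OF assms ur_admissible_self[OF assms] lhs_proc_UR_P])
    fix a assume "a \<in> P"
    show "\<exists>b \<in> proc_UR_P P. lhs b = lhs a \<and> dist b = dist a \<and> (a \<in> S \<longrightarrow> b \<in> proc_UR_S P S) \<and>
        (flag b = flag a \<or> (\<exists>c \<in> P - U P. flag c \<and> lhs c = lhs a))"
    proof (cases "a \<in> U P")
      case True
      then show ?thesis by (intro bexI[of _ a]) (auto simp: proc_UR_P_def proc_UR_S_def)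
    next
      case False
      with \<open>a \<in> P\<close> show ?thesis
        by (intro bexI[of _ "a\<lparr>flag := False\<rparr>"]) (auto simp: proc_UR_P_def proc_UR_S_def)
    qed
  qed
qed

lemma iota_problem_proc_UR_compl_le:
  assumes "\<forall>a \<in> P. variable_condition a"
  shows "cle (iota_problem Sig (proc_UR_P P) (proc_UR_P P - proc_UR_S P S)) (iota_problem Sig P (P - S))"
proof (rule iota_problem_mono)
  show "basic Sig P = basic Sig (proc_UR_P P)" by (simp add: basic_proc_UR_P)
  fix t assume "basic Sig (proc_UR_P P) t"
  then have "basic Sig P t" by (simp add: basic_proc_UR_P)
  then show "edh (proc_UR_P P) (proc_UR_P P - proc_UR_S P S) t \<le> edh P (P - S) t"
  proof (rule edh_le_relabel[OF assms ur_admissible_proc_UR_P[OF assms] lhs_proc_UR_P[symmetric]])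
    fix b assume "b \<in> proc_UR_P P"
    then consider "b \<in> U P" | a where "a \<in> P - U P" "b = a\<lparr>flag := False\<rparr>"
      unfolding proc_UR_P_def by blast
    then show "\<exists>a \<in> P. lhs a = lhs b \<and> dist a = dist b \<and>
        (b \<in> proc_UR_P P - proc_UR_S P S \<longrightarrow> a \<in> P - S) \<and>
        (flag a = flag b \<or> (\<exists>c \<in> P - U P. flag c \<and> lhs c = lhs b))"
    proof cases
      case 1
      then show ?thesis using U_memD by (intro bexI[of _ b]) (auto simp: proc_UR_S_def)
    next
      case (2 a)
      then show ?thesis by (intro bexI[of _ a]) (auto simp: proc_UR_S_def)
    qed
  qed
qed

theorem mainTheorem5:
  fixes Sig :: "('f \<times> nat) set"
  assumes "finite Sig"
  shows "sound_proc Sig (proc_UR :: ('f, 'v) adp_problem \<Rightarrow> cplx \<times> ('f, 'v) adp_problem list)"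
  unfolding sound_proc_def
proof (intro allI impI)
  fix T :: "('f, 'v) ptree" and v
  assume wf: "well_formed Sig T" and v: "v \<in> pt_paths T"
  obtain P S where PS: "pt_A (pt_sub T v) = (P, S)" by (cases "pt_A (pt_sub T v)")
  have "valid_problem Sig (P, S)" using wf v PS unfolding well_formed_def proof_tree_def by metis
  then have vc: "\<forall>a \<in> P. variable_condition a"
    unfolding valid_problem_def using variable_condition_if_valid_adp by auto
  have "cle (iota_problem Sig P (P - S)) (pt_anc T v)"
    using wf v PS unfolding well_formed_def by fastforce
  with iota_problem_proc_UR_compl_le[OF vc]
  have "cle (iota_problem Sig (proc_UR_P P) (proc_UR_P P - proc_UR_S P S)) (pt_anc T v)"
    by (rule cle_trans)
  with iota_problem_le_proc_UR[OF vc] show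
    "let (P, S) = pt_A (pt_sub T v); (c, ps) = proc_UR (P, S) in
       cle (iota_problem Sig P S) (cmax_list ([pt_anc T v, c] @ map (iota_of Sig) ps)) \<and>
       (\<forall>(Pi, Si) \<in> set ps. cle (iota_problem Sig Pi (Pi - Si)) (cmax (pt_anc T v) c))"
    unfolding PS proc_UR_eq
    by (simp add: cmax_list_def iota_of_def cle_cmax_left cle_cmax_right)
qed

end
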